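(* Let $G$ be a group. Then $G$ is sofic as a group if and only if $G$ is strongly sofic as a monoid.
   Context: Hamming metric on $\operatorname{Map}(D)$ (monoid of maps $D\to D$, $D$ finite non-empty): $d_D^{\mathrm{Ham}}(f,g)=\frac{1}{|D|}|\{v:f(v)\ne g(v)\}|$. A group $G$ is sofic (as a group) if for every finite $K\subset G$ and $\varepsilon>0$ there are a non-empty finite set $D$ and a map $\sigma\colon G\to\mathrm{Sym}(D)$ (permutations of $D$) with $\sigma(1_G)=\mathrm{Id}_D$, $d_D^{\mathrm{Ham}}(\sigma(k_1k_2),\sigma(k_1)\sigma(k_2))\le\varepsilon$ for all $k_1,k_2\in K$, and $d_D^{\mathrm{Ham}}(\sigma(k_1),\sigma(k_2))\ge1-\varepsilon$ for all distinct $k_1,k_2\in K$. A monoid $M$ is strongly sofic if for every finite $K\subset M$ there is an integer $\Delta_K\ge1$ such that for every $\varepsilon>0$ there exist a non-empty finite set $D$ and a map $\sigma\colon M\to\operatorname{Map}(D)$ with (1) $\sigma(1_M)=\mathrm{Id}_D$; (2) $d_D^{\mathrm{Ham}}(\sigma(k_1k_2),\sigma(k_1)\sigma(k_2))\le\varepsilon$ for $k_1,k_2\in K$; (3) $d_D^{\mathrm{Ham}}(\sigma(k_1),\sigma(k_2))\ge1-\varepsilon$ for distinct $k_1,k_2\in K$; (4) $|\sigma(k)^{-1}(v)|\le\Delta_K$ for $k\in K$, $v\in D$. *)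

theory Defs
  imports Complex_Main "HOL-Algebra.Group"
begin

text \<open>Normalized Hamming distance on maps D -> D (functions are compared only on D).
  Finite sets D are taken as finite subsets of nat (any finite set is in bijection with one).\<close>
definition ham :: "nat set \<Rightarrow> (nat \<Rightarrow> nat) \<Rightarrow> (nat \<Rightarrow> nat) \<Rightarrow> real" where
  "ham D f g = real (card {v \<in> D. f v \<noteq> g v}) / real (card D)"

definition sofic_group :: "('a, 'b) monoid_scheme \<Rightarrow> bool" where
  "sofic_group G \<longleftrightarrow>
    (\<forall>K (\<epsilon>::real). K \<subseteq> carrier G \<and> finite K \<and> \<epsilon> > 0 \<longrightarrow>
      (\<exists>(D::nat set) (\<sigma>::'a \<Rightarrow> nat \<Rightarrow> nat).
         finite D \<and> D \<noteq> {} \<and>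
         (\<forall>x\<in>carrier G. bij_betw (\<sigma> x) D D) \<and>
         (\<forall>v\<in>D. \<sigma> \<one>\<^bsub>G\<^esub> v = v) \<and>
         (\<forall>k1\<in>K. \<forall>k2\<in>K. ham D (\<sigma> (k1 \<otimes>\<^bsub>G\<^esub> k2)) (\<sigma> k1 \<circ> \<sigma> k2) \<le> \<epsilon>) \<and>
         (\<forall>k1\<in>K. \<forall>k2\<in>K. k1 \<noteq> k2 \<longrightarrow> ham D (\<sigma> k1) (\<sigma> k2) \<ge> 1 - \<epsilon>)))"

definition strongly_sofic_monoid :: "('a, 'b) monoid_scheme \<Rightarrow> bool" where
  "strongly_sofic_monoid M \<longleftrightarrow>
    (\<forall>K. K \<subseteq> carrier M \<and> finite K \<longrightarrow>
      (\<exists>\<Delta>::nat. \<Delta> \<ge> 1 \<and>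
        (\<forall>\<epsilon>::real. \<epsilon> > 0 \<longrightarrow>
          (\<exists>(D::nat set) (\<sigma>::'a \<Rightarrow> nat \<Rightarrow> nat).
             finite D \<and> D \<noteq> {} \<and>
             (\<forall>x\<in>carrier M. \<sigma> x ` D \<subseteq> D) \<and>
             (\<forall>v\<in>D. \<sigma> \<one>\<^bsub>M\<^esub> v = v) \<and>
             (\<forall>k1\<in>K. \<forall>k2\<in>K. ham D (\<sigma> (k1 \<otimes>\<^bsub>M\<^esub> k2)) (\<sigma> k1 \<circ> \<sigma> k2) \<le> \<epsilon>) \<and>
             (\<forall>k1\<in>K. \<forall>k2\<in>K. k1 \<noteq> k2 \<longrightarrow> ham D (\<sigma> k1) (\<sigma> k2) \<ge> 1 - \<epsilon>) \<and>
             (\<forall>k\<in>K. \<forall>v\<in>D. card {w \<in> D. \<sigma> k w = v} \<le> \<Delta>)))))"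

end

(* A sofic approximation by permutations is a strong one with fibre bound 1.  Conversely, take
   an approximation by self-maps sigma of D on a finite set closed under the products and inverses
   that occur.  Since sigma(x^-1) o sigma(x) is close to sigma(1) = id, sigma(x) is injective on
   most of D and differs from a permutation only on a small set.  Replacing each sigma(x) by such
   a permutation perturbs all Hamming distances by O(epsilon). *)
theory Submission
  imports Defs
begin

lemma ham_cong:
  assumes "\<And>v. v \<in> D \<Longrightarrow> f v = f' v" "\<And>v. v \<in> D \<Longrightarrow> g v = g' v"
  shows "ham D f g = ham D f' g'"
  using assms unfolding ham_def by (metis (mono_tags, lifting) Collect_cong)

lemma ham_commute: "ham D f g = ham D g f"
  unfolding ham_def by (metis (no_types, lifting) Collect_cong)

lemma ham_mono:
  assumes "finite D" "{v \<in> D. f v \<noteq> g v} \<subseteq> {v \<in> D. f' v \<noteq> g' v}"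
  shows "ham D f g \<le> ham D f' g'"
  unfolding ham_def using assms by (intro divide_right_mono) (auto intro: card_mono)

lemma ham_triangle:
  assumes "finite D"
  shows "ham D f h \<le> ham D f g + ham D g h"
proof -
  have "card {v \<in> D. f v \<noteq> h v} \<le> card ({v \<in> D. f v \<noteq> g v} \<union> {v \<in> D. g v \<noteq> h v})"
    using assms by (intro card_mono) auto
  also have "\<dots> \<le> card {v \<in> D. f v \<noteq> g v} + card {v \<in> D. g v \<noteq> h v}"
    by (rule card_Un_le)
  finally show ?thesis
    unfolding ham_def by (simp add: add_divide_distrib[symmetric] divide_right_mono)
qed

lemma ham_comp_right_le:
  assumes "finite D" "inj_on h D" "h ` D \<subseteq> D"
  shows "ham D (f \<circ> h) (g \<circ> h) \<le> ham D f g"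
proof -
  have "card {v \<in> D. f (h v) \<noteq> g (h v)} \<le> card {w \<in> D. f w \<noteq> g w}"
    using assms by (intro card_inj_on_le[where f = h]) (auto intro: inj_on_subset)
  then show ?thesis
    unfolding ham_def by (simp add: divide_right_mono)
qed

lemma ham_comp_le:
  assumes "finite D" "inj_on g2 D" "g2 ` D \<subseteq> D"
  shows "ham D (f1 \<circ> f2) (g1 \<circ> g2) \<le> ham D f1 g1 + ham D f2 g2"
proof -
  have "ham D (f1 \<circ> f2) (g1 \<circ> g2) \<le> ham D (f1 \<circ> f2) (f1 \<circ> g2) + ham D (f1 \<circ> g2) (g1 \<circ> g2)"
    using assms(1) by (rule ham_triangle)
  also have "\<dots> \<le> ham D f2 g2 + ham D f1 g1"
    using assms by (intro add_mono ham_comp_right_le ham_mono) auto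
  finally show ?thesis by simp
qed

lemma ham_comp_perturb:
  assumes "finite D" "inj_on g2 D" "g2 ` D \<subseteq> D"
  shows "ham D g (g1 \<circ> g2) \<le> ham D g f + ham D f (f1 \<circ> f2) + ham D f1 g1 + ham D f2 g2"
  using ham_triangle[OF assms(1), of g "g1 \<circ> g2" f] ham_triangle[OF assms(1), of f "g1 \<circ> g2" "f1 \<circ> f2"]
    ham_comp_le[OF assms, of f1 f2 g1] by linarith

lemma ham_perturb_ge:
  assumes "finite D"
  shows "ham D f1 f2 - ham D f1 g1 - ham D f2 g2 \<le> ham D g1 g2"
  using ham_triangle[OF assms, of f1 f2 g1] ham_triangle[OF assms, of g1 f2 g2] ham_commute[of D f2 g2]
  by linarith

lemma card_fibre_le_one:
  assumes "inj_on f D"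
  shows "card {w \<in> D. f w = v} \<le> 1"
proof -
  have "{w \<in> D. f w = v} = f -` {v} \<inter> D" by blast
  then show ?thesis
    using card_vimage_inj_on_le[OF assms, of "{v}"] by simp
qed

lemma inj_on_extends_to_bij_betw:
  assumes "finite D" "A \<subseteq> D" "inj_on f A" "f ` A \<subseteq> D"
  obtains \<pi> where "bij_betw \<pi> D D" "\<And>v. v \<in> A \<Longrightarrow> \<pi> v = f v"
proof -
  have "card (D - A) = card (D - f ` A)"
    using assms by (simp add: card_Diff_subset card_image finite_subset)
  then obtain h where h: "bij_betw h (D - A) (D - f ` A)"
    using assms(1) finite_same_card_bij by blast
  have "bij_betw (\<lambda>v. if v \<in> A then f v else h v) (A \<union> (D - A)) (f ` A \<union> (D - f ` A))"
    using assms(3) by (intro bij_betw_disjoint_Un[OF _ h]) (auto simp: bij_betw_imageI)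
  moreover have "A \<union> (D - A) = D" "f ` A \<union> (D - f ` A) = D"
    using assms by auto
  ultimately show ?thesis
    using that[of "\<lambda>v. if v \<in> A then f v else h v"] by simp
qed

lemma bij_betw_near_left_invertible:
  assumes "finite D" "f ` D \<subseteq> D"
  obtains \<pi> where "bij_betw \<pi> D D" "\<And>v. v \<in> D \<Longrightarrow> g (f v) = v \<Longrightarrow> \<pi> v = f v"
    "ham D \<pi> f \<le> ham D (g \<circ> f) id"
proof -
  define A where "A = {v \<in> D. g (f v) = v}"
  have "inj_on f A"
    unfolding A_def by (rule inj_onI) (metis (mono_tags, lifting) mem_Collect_eq)
  then obtain \<pi> where \<pi>: "bij_betw \<pi> D D" "\<And>v. v \<in> A \<Longrightarrow> \<pi> v = f v"
    using inj_on_extends_to_bij_betw[OF assms(1), of A f] assms(2) by (auto simp: A_def)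
  moreover have "ham D \<pi> f \<le> ham D (g \<circ> f) id"
    using assms(1) \<pi>(2) by (intro ham_mono) (auto simp: A_def)
  ultimately show ?thesis
    using that by (simp add: A_def)
qed

lemma sofic_groupE:
  assumes "sofic_group G" "K \<subseteq> carrier G" "finite K" "\<epsilon> > 0"
  obtains D \<sigma> where "finite D" "D \<noteq> {}" "\<forall>x\<in>carrier G. bij_betw (\<sigma> x) D D"
    "\<forall>v\<in>D. \<sigma> \<one>\<^bsub>G\<^esub> v = v"
    "\<forall>k1\<in>K. \<forall>k2\<in>K. ham D (\<sigma> (k1 \<otimes>\<^bsub>G\<^esub> k2)) (\<sigma> k1 \<circ> \<sigma> k2) \<le> \<epsilon>"
    "\<forall>k1\<in>K. \<forall>k2\<in>K. k1 \<noteq> k2 \<longrightarrow> ham D (\<sigma> k1) (\<sigma> k2) \<ge> 1 - \<epsilon>"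
  using assms unfolding sofic_group_def
  by (elim allE[of _ K] allE[of _ \<epsilon>] impE exE conjE) (auto intro: that)

lemma sofic_group_imp_strongly_sofic_monoid:
  assumes "sofic_group G"
  shows "strongly_sofic_monoid G"
  unfolding strongly_sofic_monoid_def
proof (intro allI impI exI[of _ 1] conjI)
  fix K and \<epsilon> :: real
  assume "K \<subseteq> carrier G \<and> finite K" "\<epsilon> > 0"
  then have K: "K \<subseteq> carrier G" "finite K" "\<epsilon> > 0"
    by simp_all
  then obtain D \<sigma> where D: "finite D" "D \<noteq> {}" and perm: "\<forall>x\<in>carrier G. bij_betw (\<sigma> x) D D"
    and one: "\<forall>v\<in>D. \<sigma> \<one>\<^bsub>G\<^esub> v = v"
    and mult: "\<forall>k1\<in>K. \<forall>k2\<in>K. ham D (\<sigma> (k1 \<otimes>\<^bsub>G\<^esub> k2)) (\<sigma> k1 \<circ> \<sigma> k2) \<le> \<epsilon>"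
    and sep: "\<forall>k1\<in>K. \<forall>k2\<in>K. k1 \<noteq> k2 \<longrightarrow> ham D (\<sigma> k1) (\<sigma> k2) \<ge> 1 - \<epsilon>"
    by (rule sofic_groupE[OF assms])
  have maps: "\<forall>x\<in>carrier G. \<sigma> x ` D \<subseteq> D"
    using perm by (simp add: bij_betw_def)
  have fibres: "\<forall>k\<in>K. \<forall>v\<in>D. card {w \<in> D. \<sigma> k w = v} \<le> 1"
    using perm K(1) by (blast intro: card_fibre_le_one bij_betw_imp_inj_on)
  show "\<exists>D \<sigma>. finite D \<and> D \<noteq> {} \<and> (\<forall>x\<in>carrier G. \<sigma> x ` D \<subseteq> D) \<and>
      (\<forall>v\<in>D. \<sigma> \<one>\<^bsub>G\<^esub> v = v) \<and>
      (\<forall>k1\<in>K. \<forall>k2\<in>K. ham D (\<sigma> (k1 \<otimes>\<^bsub>G\<^esub> k2)) (\<sigma> k1 \<circ> \<sigma> k2) \<le> \<epsilon>) \<and>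
      (\<forall>k1\<in>K. \<forall>k2\<in>K. k1 \<noteq> k2 \<longrightarrow> 1 - \<epsilon> \<le> ham D (\<sigma> k1) (\<sigma> k2)) \<and>
      (\<forall>k\<in>K. \<forall>v\<in>D. card {w \<in> D. \<sigma> k w = v} \<le> 1)"
    by (intro exI[of _ D] exI[of _ \<sigma>] conjI D maps one mult sep fibres)
qed simp

lemma ham_perturb_approximation:
  fixes M :: "('a, 'b) monoid_scheme" (structure)
  assumes "finite D" "\<forall>k\<in>K. bij_betw (\<tau> k) D D"
    and near: "\<forall>k\<in>K \<union> (\<lambda>(a, b). a \<otimes> b) ` (K \<times> K). ham D (\<tau> k) (\<sigma> k) \<le> \<delta>"
    and mult: "\<forall>k1\<in>K. \<forall>k2\<in>K. ham D (\<sigma> (k1 \<otimes> k2)) (\<sigma> k1 \<circ> \<sigma> k2) \<le> \<delta>"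
    and sep: "\<forall>k1\<in>K. \<forall>k2\<in>K. k1 \<noteq> k2 \<longrightarrow> ham D (\<sigma> k1) (\<sigma> k2) \<ge> 1 - \<delta>"
  shows "\<forall>k1\<in>K. \<forall>k2\<in>K. ham D (\<tau> (k1 \<otimes> k2)) (\<tau> k1 \<circ> \<tau> k2) \<le> 4 * \<delta>"
    and "\<forall>k1\<in>K. \<forall>k2\<in>K. k1 \<noteq> k2 \<longrightarrow> ham D (\<tau> k1) (\<tau> k2) \<ge> 1 - 3 * \<delta>"
proof -
  have near_K: "ham D (\<sigma> k) (\<tau> k) \<le> \<delta>" if "k \<in> K" for k
    using near that ham_commute[of D "\<sigma> k" "\<tau> k"] by auto
  show "\<forall>k1\<in>K. \<forall>k2\<in>K. ham D (\<tau> (k1 \<otimes> k2)) (\<tau> k1 \<circ> \<tau> k2) \<le> 4 * \<delta>"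
  proof (intro ballI)
    fix k1 k2 assume k: "k1 \<in> K" "k2 \<in> K"
    have "k1 \<otimes> k2 \<in> K \<union> (\<lambda>(a, b). a \<otimes> b) ` (K \<times> K)"
      using k by blast
    with near have near_prod: "ham D (\<tau> (k1 \<otimes> k2)) (\<sigma> (k1 \<otimes> k2)) \<le> \<delta>"
      by blast
    have "inj_on (\<tau> k2) D" "\<tau> k2 ` D \<subseteq> D"
      using assms(2) k by (auto simp: bij_betw_def)
    from ham_comp_perturb[OF assms(1) this, of "\<tau> (k1 \<otimes> k2)" "\<tau> k1" "\<sigma> (k1 \<otimes> k2)" "\<sigma> k1" "\<sigma> k2"]
    show "ham D (\<tau> (k1 \<otimes> k2)) (\<tau> k1 \<circ> \<tau> k2) \<le> 4 * \<delta>"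
      using near_prod mult[rule_format, OF k] near_K[OF k(1)] near_K[OF k(2)] by linarith
  qed
  show "\<forall>k1\<in>K. \<forall>k2\<in>K. k1 \<noteq> k2 \<longrightarrow> ham D (\<tau> k1) (\<tau> k2) \<ge> 1 - 3 * \<delta>"
  proof (intro ballI impI)
    fix k1 k2 assume k: "k1 \<in> K" "k2 \<in> K" and ne: "k1 \<noteq> k2"
    from ham_perturb_ge[OF assms(1), of "\<sigma> k1" "\<sigma> k2" "\<tau> k1" "\<tau> k2"]
    show "ham D (\<tau> k1) (\<tau> k2) \<ge> 1 - 3 * \<delta>"
      using near_K[OF k(1)] near_K[OF k(2)] sep[rule_format, OF k ne] by linarith
  qed
qed

lemma strongly_sofic_monoidE:
  assumes "strongly_sofic_monoid M" "K \<subseteq> carrier M" "finite K" "\<epsilon> > 0"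
  obtains D \<sigma> where "finite D" "D \<noteq> {}" "\<forall>x\<in>carrier M. \<sigma> x ` D \<subseteq> D" "\<forall>v\<in>D. \<sigma> \<one>\<^bsub>M\<^esub> v = v"
    "\<forall>k1\<in>K. \<forall>k2\<in>K. ham D (\<sigma> (k1 \<otimes>\<^bsub>M\<^esub> k2)) (\<sigma> k1 \<circ> \<sigma> k2) \<le> \<epsilon>"
    "\<forall>k1\<in>K. \<forall>k2\<in>K. k1 \<noteq> k2 \<longrightarrow> ham D (\<sigma> k1) (\<sigma> k2) \<ge> 1 - \<epsilon>"
  using assms unfolding strongly_sofic_monoid_def
  by (elim allE[of _ K] impE exE conjE allE[of _ \<epsilon>]) (auto intro: that)

lemma (in group) permutations_near_almost_invertible_maps:
  assumes "finite D" "\<forall>x\<in>carrier G. \<sigma> x ` D \<subseteq> D" "\<forall>v\<in>D. \<sigma> \<one> v = v" "P \<subseteq> carrier G"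
    and "\<forall>x\<in>P. ham D (\<sigma> (inv x) \<circ> \<sigma> x) (\<sigma> \<one>) \<le> \<delta>"
  obtains \<tau> where "\<forall>x\<in>carrier G. bij_betw (\<tau> x) D D" "\<forall>v\<in>D. \<tau> \<one> v = v"
    "\<forall>x\<in>P. ham D (\<tau> x) (\<sigma> x) \<le> \<delta>"
proof -
  have "\<forall>x\<in>P. \<exists>\<pi>. bij_betw \<pi> D D \<and> (\<forall>v\<in>D. \<sigma> (inv x) (\<sigma> x v) = v \<longrightarrow> \<pi> v = \<sigma> x v)
    \<and> ham D \<pi> (\<sigma> x) \<le> \<delta>"
  proof
    fix x assume x: "x \<in> P"
    obtain \<pi> where \<pi>: "bij_betw \<pi> D D" "\<And>v. v \<in> D \<Longrightarrow> \<sigma> (inv x) (\<sigma> x v) = v \<Longrightarrow> \<pi> v = \<sigma> x v"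
      "ham D \<pi> (\<sigma> x) \<le> ham D (\<sigma> (inv x) \<circ> \<sigma> x) id"
      using bij_betw_near_left_invertible[OF assms(1), of "\<sigma> x" "\<sigma> (inv x)"] assms(2,4) x by blast
    have "ham D (\<sigma> (inv x) \<circ> \<sigma> x) id = ham D (\<sigma> (inv x) \<circ> \<sigma> x) (\<sigma> \<one>)"
      using assms(3) by (intro ham_cong) auto
    then show "\<exists>\<pi>. bij_betw \<pi> D D \<and> (\<forall>v\<in>D. \<sigma> (inv x) (\<sigma> x v) = v \<longrightarrow> \<pi> v = \<sigma> x v)
      \<and> ham D \<pi> (\<sigma> x) \<le> \<delta>"
      using \<pi> assms(5) x by force
  qed
  then obtain \<pi> where \<pi>: "\<forall>x\<in>P. bij_betw (\<pi> x) D D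
      \<and> (\<forall>v\<in>D. \<sigma> (inv x) (\<sigma> x v) = v \<longrightarrow> \<pi> x v = \<sigma> x v) \<and> ham D (\<pi> x) (\<sigma> x) \<le> \<delta>"
    by (rule bchoice[THEN exE])
  \<comment> \<open>\<open>\<pi> \<one>\<close> agrees with \<open>\<sigma> \<one>\<close> on all of \<open>D\<close>, because \<open>inv \<one> = \<one>\<close> and \<open>\<sigma> \<one>\<close> is the identity there.\<close>
  show thesis
  proof (rule that[of "\<lambda>x. if x \<in> P then \<pi> x else id"])
    show "\<forall>v\<in>D. (if \<one> \<in> P then \<pi> \<one> else id) v = v"
      using \<pi> assms(3) by auto
  qed (use \<pi> in auto)
qed

lemma (in group) strongly_sofic_monoid_imp_sofic_group:
  assumes "strongly_sofic_monoid G"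
  shows "sofic_group G"
  unfolding sofic_group_def
proof (intro allI impI)
  fix K and \<epsilon> :: real
  assume K: "K \<subseteq> carrier G \<and> finite K \<and> \<epsilon> > 0"
  define P where "P = K \<union> (\<lambda>(a, b). a \<otimes> b) ` (K \<times> K)"
  define K' where "K' = P \<union> (\<lambda>x. inv x) ` P"
  have P: "P \<subseteq> carrier G" "finite P"
    using K by (auto simp: P_def)
  then have "K' \<subseteq> carrier G" "finite K'"
    by (auto simp: K'_def)
  with assms obtain D \<sigma> where D: "finite D" "D \<noteq> {}"
    and maps: "\<forall>x\<in>carrier G. \<sigma> x ` D \<subseteq> D" and one: "\<forall>v\<in>D. \<sigma> \<one> v = v"
    and mult: "\<forall>k1\<in>K'. \<forall>k2\<in>K'. ham D (\<sigma> (k1 \<otimes> k2)) (\<sigma> k1 \<circ> \<sigma> k2) \<le> \<epsilon> / 4"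
    and sep: "\<forall>k1\<in>K'. \<forall>k2\<in>K'. k1 \<noteq> k2 \<longrightarrow> ham D (\<sigma> k1) (\<sigma> k2) \<ge> 1 - \<epsilon> / 4"
    using strongly_sofic_monoidE[of G K' "\<epsilon> / 4"] K by auto
  have "ham D (\<sigma> (inv x) \<circ> \<sigma> x) (\<sigma> \<one>) \<le> \<epsilon> / 4" if "x \<in> P" for x
  proof -
    have "inv x \<in> K'" "x \<in> K'" "inv x \<otimes> x = \<one>"
      using that P(1) by (auto simp: K'_def)
    then show ?thesis
      using mult ham_commute by metis
  qed
  then obtain \<tau> where perm: "\<forall>x\<in>carrier G. bij_betw (\<tau> x) D D" and \<tau>_one: "\<forall>v\<in>D. \<tau> \<one> v = v"
    and near: "\<forall>x\<in>P. ham D (\<tau> x) (\<sigma> x) \<le> \<epsilon> / 4"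
    using permutations_near_almost_invertible_maps[OF D(1) maps one P(1)] by blast
  have "\<forall>k\<in>K. bij_betw (\<tau> k) D D"
    using perm K by blast
  from ham_perturb_approximation[OF D(1) this, where M = G and \<sigma> = \<sigma> and \<delta> = "\<epsilon> / 4"] near mult sep
  have mult_\<tau>: "\<forall>k1\<in>K. \<forall>k2\<in>K. ham D (\<tau> (k1 \<otimes> k2)) (\<tau> k1 \<circ> \<tau> k2) \<le> \<epsilon>"
    and sep_\<tau>: "\<forall>k1\<in>K. \<forall>k2\<in>K. k1 \<noteq> k2 \<longrightarrow> ham D (\<tau> k1) (\<tau> k2) \<ge> 1 - 3 * (\<epsilon> / 4)"
    by (auto simp: P_def K'_def)
  have sep_\<tau>': "\<forall>k1\<in>K. \<forall>k2\<in>K. k1 \<noteq> k2 \<longrightarrow> ham D (\<tau> k1) (\<tau> k2) \<ge> 1 - \<epsilon>"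
  proof (intro ballI impI)
    fix k1 k2 assume "k1 \<in> K" "k2 \<in> K" "k1 \<noteq> k2"
    with sep_\<tau> K show "ham D (\<tau> k1) (\<tau> k2) \<ge> 1 - \<epsilon>" by fastforce
  qed
  show "\<exists>D \<sigma>. finite D \<and> D \<noteq> {} \<and> (\<forall>x\<in>carrier G. bij_betw (\<sigma> x) D D) \<and>
      (\<forall>v\<in>D. \<sigma> \<one> v = v) \<and>
      (\<forall>k1\<in>K. \<forall>k2\<in>K. ham D (\<sigma> (k1 \<otimes> k2)) (\<sigma> k1 \<circ> \<sigma> k2) \<le> \<epsilon>) \<and>
      (\<forall>k1\<in>K. \<forall>k2\<in>K. k1 \<noteq> k2 \<longrightarrow> 1 - \<epsilon> \<le> ham D (\<sigma> k1) (\<sigma> k2))"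
    by (intro exI[of _ D] exI[of _ \<tau>] conjI D perm \<tau>_one mult_\<tau> sep_\<tau>')
qed

theorem proposition3p3:
  fixes G :: "('a, 'b) monoid_scheme"
  assumes "group G"
  shows "sofic_group G \<longleftrightarrow> strongly_sofic_monoid G"
  using sofic_group_imp_strongly_sofic_monoid group.strongly_sofic_monoid_imp_sofic_group[OF assms]
  by (rule iffI)

end
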